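(* The SRT$_{\mathsf{AD}}$-definable transformations are closed under union, intersection and composition, and the SRT$_{\mathsf{AU}}$-definable transformations are closed under union, intersection and composition. (Here, for a class $\mathcal{C}$ of transducers, closure means: for $\mathcal{C}$-transducers $\mathcal{S}_1,\mathcal{S}_2$ over a common linear group and compatible label sets, the union, intersection (same signature) and composition $[\![\mathcal{S}_1]\!]\cdot[\![\mathcal{S}_2]\!]$ are each equal to $[\![\mathcal{S}]\!]$ for some $\mathcal{C}$-transducer $\mathcal{S}$.)
   Context: A linear group is a triple $\mathbf{G}=(D,\leq,+)$ where $D$ is an infinite set, $\leq$ is a total order on $D$, and $(D,+)$ is a group with identity $0$. For finite label sets $\Sigma,\Gamma$, a $(\Sigma,\Gamma,\mathbf{G})$-streaming register transducer (SRT) is a tuple $\mathcal{S}=(Q,q_0,k,R_0,\Delta)$: $Q$ finite set of states, $q_0\in Q$, $k\in\mathbb{N}$ registers, initial values $R_0\in D^k$, and transitions $\Delta\subseteq Q\times\Sigma\times\{>,=,<\}^k\times\{\mathsf{old},\mathsf{new},\mathsf{add}\}^k\times\{1,\dots,k\}\times\Gamma\times Q$. A transition $(q,\sigma,l,m,u,\gamma,q')$ enables the step $(q,R)\xrightarrow[(\gamma,d')]{(\sigma,d)}(q',R')$ iff (1) for every $i$, $d>R[i]$, $d=R[i]$ or $d<R[i]$ according as $l[i]$ is $>$, $=$, $<$; (2) $R'[i]=R[i]$, $d$, or $R[i]+d$ according as $m[i]$ is $\mathsf{old}$, $\mathsf{new}$, $\mathsf{add}$; (3) $d'=R'[u]$.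 A run over $s\in(\Sigma\times D)^*$ of length $n$ generating $t\in(\Gamma\times D)^*$ is a sequence of $n$ enabled steps from $(q_0,R_0)$ reading $s[i]$ and emitting $t[i]$. $s\otimes t$ is the word with $i$-th letter $(s[i],t[i])$; $[\![\mathcal{S}]\!]=\{s\otimes t:\text{there is a run over }s\text{ generating }t\}$. SRT$_{\mathsf{A}}$ (add-free): all update vectors lie in $\{\mathsf{old},\mathsf{new}\}^k$. SRT$_{\mathsf{AD}}$: add-free and the order $\leq$ of $\mathbf{G}$ is dense (for $a<b$ there is $c$ with $a<c<b$). SRT$_{\mathsf{AU}}$: add-free and $R_0=(0,\dots,0)$. Composition: for $\mathcal{T}_1$ over $(\Sigma\times D)\times(\Gamma\times D)$ and $\mathcal{T}_2$ over $(\Gamma\times D)\times(\Theta\times D)$, $\mathcal{T}_1\cdot\mathcal{T}_2$ is the set of $s_1\otimes s_2$ ($s_1\in(\Sigma\times D)^*$, $s_2\in(\Theta\times D)^*$) such that some $s_3\in(\Gamma\times D)^*$ has $s_1\otimes s_3\in\mathcal{T}_1$ and $s_3\otimes s_2\in\mathcal{T}_2$. *)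

theory Defs
  imports Main
begin

text \<open>Linear groups: a type 'd of class linorder and group_add (no compatibility
  between order and group is assumed), with infinite carrier (stated in the theorem).
  Registers are indexed 0..k-1 (the paper's 1..k).\<close>

datatype cmp = CGt | CEq | CLt
datatype upd = UOld | UNew | UAdd

type_synonym ('a,'b) srt_trans = "nat \<times> 'a \<times> cmp list \<times> upd list \<times> nat \<times> 'b \<times> nat"

record ('a,'b,'d) srt =
  states :: "nat set"
  init :: nat
  nregs :: nat
  rinit :: "'d list"
  trans :: "('a,'b) srt_trans set"

definition wf_srt :: "('a,'b,'d) srt \<Rightarrow> bool" where
  "wf_srt S \<longleftrightarrow> finite (states S) \<and> init S \<in> states S \<and> length (rinit S) = nregs S \<and>
     (\<forall>(q,\<sigma>,l,m,u,\<gamma>,q') \<in> trans S. q \<in> states S \<and> q' \<in> states S \<and>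
        length l = nregs S \<and> length m = nregs S \<and> u < nregs S)"

fun cmp_holds :: "cmp \<Rightarrow> 'd::linorder \<Rightarrow> 'd \<Rightarrow> bool" where
  "cmp_holds CGt d r = (d > r)"
| "cmp_holds CEq d r = (d = r)"
| "cmp_holds CLt d r = (d < r)"

fun upd_val :: "upd \<Rightarrow> 'd::plus \<Rightarrow> 'd \<Rightarrow> 'd" where
  "upd_val UOld r d = r"
| "upd_val UNew r d = d"
| "upd_val UAdd r d = r + d"

definition srt_step :: "('a,'b,'d::{linorder,group_add}) srt \<Rightarrow> nat \<times> 'd list \<Rightarrow> 'a \<times> 'd
     \<Rightarrow> 'b \<times> 'd \<Rightarrow> nat \<times> 'd list \<Rightarrow> bool" where
  "srt_step S c x y c' \<longleftrightarrow>
     (\<exists>l m u. (fst c, fst x, l, m, u, fst y, fst c') \<in> trans S \<and>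
        (\<forall>i < nregs S. cmp_holds (l ! i) (snd x) (snd c ! i)) \<and>
        snd c' = map (\<lambda>i. upd_val (m ! i) (snd c ! i) (snd x)) [0..<nregs S] \<and>
        snd y = snd c' ! u)"

fun srt_run :: "('a,'b,'d::{linorder,group_add}) srt \<Rightarrow> nat \<times> 'd list
     \<Rightarrow> ('a \<times> 'd) list \<Rightarrow> ('b \<times> 'd) list \<Rightarrow> bool" where
  "srt_run S c [] [] = True"
| "srt_run S c (x # xs) (y # ys) = (\<exists>c'. srt_step S c x y c' \<and> srt_run S c' xs ys)"
| "srt_run S c _ _ = False"

text \<open>The transformation [[S]] = set of s \<otimes> t (words of pairs).\<close>
definition srt_sem :: "('a,'b,'d::{linorder,group_add}) srt
     \<Rightarrow> (('a \<times> 'd) \<times> ('b \<times> 'd)) list set" where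
  "srt_sem S = {zip s t | s t. length s = length t \<and> srt_run S (init S, rinit S) s t}"

definition add_free :: "('a,'b,'d) srt \<Rightarrow> bool" where
  "add_free S \<longleftrightarrow> (\<forall>(q,\<sigma>,l,m,u,\<gamma>,q') \<in> trans S. set m \<subseteq> {UOld, UNew})"

definition srt_AU :: "('a,'b,'d::zero) srt \<Rightarrow> bool" where
  "srt_AU S \<longleftrightarrow> wf_srt S \<and> add_free S \<and> rinit S = replicate (nregs S) 0"

text \<open>SRT_AD: add-free SRT (density of the order is a hypothesis on 'd in the theorem).\<close>
definition srt_AD :: "('a,'b,'d) srt \<Rightarrow> bool" where
  "srt_AD S \<longleftrightarrow> wf_srt S \<and> add_free S"

definition rel_comp ::
  "(('a \<times> 'd) \<times> ('b \<times> 'd)) list set \<Rightarrow> (('b \<times> 'd) \<times> ('c \<times> 'd)) list set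
     \<Rightarrow> (('a \<times> 'd) \<times> ('c \<times> 'd)) list set" where
  "rel_comp T1 T2 = {zip s1 s2 | s1 s2. length s1 = length s2 \<and>
     (\<exists>s3. length s3 = length s1 \<and> zip s1 s3 \<in> T1 \<and> zip s3 s2 \<in> T2)}"

end

theory Submission
  imports Defs "HOL-Library.Countable"
begin

(* Union runs the two transducers side by side on disjoint blocks of registers, starting from a
   fresh state that commits to one of them.

   Composition and intersection rest on add-freeness: the value an add-free SRT outputs, and
   every value it stores, is either the current input or the content of a register. Hence both
   SRTs can be simulated on a shared pool of k1 + k2 + 1 registers. Each step writes the input
   into a slot to which no simulated register points, and a simulated update merely redirects
   pointers. The guards of the simulated transitions are read off the comparison matrix of the
   pool, which is kept in the finite control. For composition, the value passed from the first
   SRT to the second is thus always in the pool, so the intermediate word never has to be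
   guessed. *)

instance cmp :: finite
proof
  show "finite (UNIV :: cmp set)"
    by (rule finite_subset[of _ "{CGt, CEq, CLt}"]) (use cmp.exhaust in auto)
qed

definition cmp_of :: "'d::linorder \<Rightarrow> 'd \<Rightarrow> cmp" where
  "cmp_of x y = (if x > y then CGt else if x = y then CEq else CLt)"

lemma cmp_holds_iff: "cmp_holds c x y \<longleftrightarrow> c = cmp_of x y"
  by (cases c) (auto simp: cmp_of_def)

lemma cmp_holds_cmp_of [simp]: "cmp_holds (cmp_of x y) x y"
  by (simp add: cmp_holds_iff)

lemma cmp_of_refl [simp]: "cmp_of x x = CEq"
  by (simp add: cmp_of_def)

lemma cmp_of_eq_CEq_iff [simp]: "cmp_of x y = CEq \<longleftrightarrow> x = y"
  by (auto simp: cmp_of_def)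

fun flip_cmp :: "cmp \<Rightarrow> cmp" where
  "flip_cmp CGt = CLt" | "flip_cmp CEq = CEq" | "flip_cmp CLt = CGt"

lemma flip_cmp_of: "flip_cmp (cmp_of x y) = cmp_of y x"
  by (auto simp: cmp_of_def)

lemma all_nth_cmp_holds_iff:
  assumes "length l = length R"
  shows "(\<forall>i < length R. cmp_holds (l ! i) d (R ! i)) \<longleftrightarrow> l = map (cmp_of d) R"
  using assms unfolding cmp_holds_iff by (auto simp: list_eq_iff_nth_eq)

lemma map_upd_val_upt:
  assumes "length m = length R"
  shows "map (\<lambda>i. upd_val (m ! i) (R ! i) d) [0..<length R] = map2 (\<lambda>c r. upd_val c r d) m R"
  using assms by (intro nth_equalityI) auto

lemma map2_upd_val_UOld [simp]: "map2 (\<lambda>c r. upd_val c r d) (replicate n UOld) R = take n R"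
  by (intro nth_equalityI) auto

section \<open>Register machines over arbitrary state spaces\<close>

(* The guard of an enabled transition is determined by the input and the registers. *)
fun reg_step :: "('s \<times> 'a \<times> cmp list \<times> upd list \<times> nat \<times> 'b \<times> 's) set \<Rightarrow>
    's \<times> 'd::{linorder,group_add} list \<Rightarrow> 'a \<times> 'd \<Rightarrow> 'b \<times> 'd \<Rightarrow> 's \<times> 'd list \<Rightarrow> bool" where
  "reg_step T (q, R) (\<sigma>, d) (\<gamma>, w) (q', R') \<longleftrightarrow>
     (\<exists>m u. (q, \<sigma>, map (cmp_of d) R, m, u, \<gamma>, q') \<in> T \<and>
        R' = map2 (\<lambda>c r. upd_val c r d) m R \<and> w = R' ! u)"

fun reg_run :: "('s \<times> 'a \<times> cmp list \<times> upd list \<times> nat \<times> 'b \<times> 's) set \<Rightarrow>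
    's \<times> 'd::{linorder,group_add} list \<Rightarrow> ('a \<times> 'd) list \<Rightarrow> ('b \<times> 'd) list \<Rightarrow> bool" where
  "reg_run T c [] [] = True"
| "reg_run T c (x # xs) (y # ys) = (\<exists>c'. reg_step T c x y c' \<and> reg_run T c' xs ys)"
| "reg_run T c _ _ = False"

lemma reg_run_Nil_iff [simp]: "reg_run T c [] ys \<longleftrightarrow> ys = []"
  by (cases ys) auto

lemma reg_run_length: "reg_run T c xs ys \<Longrightarrow> length xs = length ys"
  by (induction T c xs ys rule: reg_run.induct) auto

definition regs_wf :: "nat \<Rightarrow> ('s \<times> 'a \<times> cmp list \<times> upd list \<times> nat \<times> 'b \<times> 's) set \<Rightarrow> bool" where
  "regs_wf k T \<longleftrightarrow> (\<forall>(q, \<sigma>, l, m, u, \<gamma>, q') \<in> T. length l = k \<and> length m = k \<and> u < k)"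

lemma regs_wfD:
  "regs_wf k T \<Longrightarrow> (q, \<sigma>, l, m, u, \<gamma>, q') \<in> T \<Longrightarrow> length l = k \<and> length m = k \<and> u < k"
  unfolding regs_wf_def by fast

lemma reg_step_length:
  "reg_step T (q, R) x y (q', R') \<Longrightarrow> regs_wf (length R) T \<Longrightarrow> length R' = length R"
  by (cases x; cases y) (auto dest: regs_wfD)

lemma wf_srt_regs_wf: "wf_srt S \<Longrightarrow> regs_wf (nregs S) (trans S)"
  unfolding wf_srt_def regs_wf_def by fast

lemma srt_step_iff_reg_step:
  assumes "wf_srt S" "length R = nregs S"
  shows "srt_step S (q, R) x y (q', R') \<longleftrightarrow> reg_step (trans S) (q, R) x y (q', R')"
proof -
  obtain \<sigma> d \<gamma> w where xy: "x = (\<sigma>, d)" "y = (\<gamma>, w)" by fastforce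
  have lengths: "length l = length R" "length m = length R"
    if "(q, \<sigma>, l, m, u, \<gamma>, q') \<in> trans S" for l m u
    using regs_wfD[OF wf_srt_regs_wf[OF assms(1)] that] assms(2) by simp_all
  show ?thesis
  proof
    assume "srt_step S (q, R) x y (q', R')"
    then obtain l m u where t: "(q, \<sigma>, l, m, u, \<gamma>, q') \<in> trans S"
      and "\<forall>i < length R. cmp_holds (l ! i) d (R ! i)"
      and "R' = map (\<lambda>i. upd_val (m ! i) (R ! i) d) [0..<length R]" and "w = R' ! u"
      unfolding xy srt_step_def using assms(2) by auto
    with lengths[OF t] show "reg_step (trans S) (q, R) x y (q', R')"
      unfolding xy by (auto simp: all_nth_cmp_holds_iff map_upd_val_upt)
  next
    assume "reg_step (trans S) (q, R) x y (q', R')"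
    then obtain m u where t: "(q, \<sigma>, map (cmp_of d) R, m, u, \<gamma>, q') \<in> trans S"
      and "R' = map2 (\<lambda>c r. upd_val c r d) m R" and "w = R' ! u"
      unfolding xy by auto
    with lengths[OF t] show "srt_step S (q, R) x y (q', R')"
      unfolding xy srt_step_def fst_conv snd_conv assms(2)[symmetric]
      by (intro exI[of _ "map (cmp_of d) R"] exI[of _ m] exI[of _ u])
        (auto simp: all_nth_cmp_holds_iff map_upd_val_upt)
  qed
qed

lemma srt_run_iff_reg_run:
  assumes "wf_srt S" "length R = nregs S"
  shows "srt_run S (q, R) xs ys \<longleftrightarrow> reg_run (trans S) (q, R) xs ys"
  using assms(2)
proof (induction xs arbitrary: q R ys)
  case Nil
  then show ?case by (cases ys) auto
next
  case (Cons x xs)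
  have step_length: "length R' = nregs S" if "reg_step (trans S) (q, R) x y (q', R')" for y q' R'
    using reg_step_length[OF that] wf_srt_regs_wf[OF assms(1)] Cons.prems by simp
  show ?case
  proof (cases ys)
    case (Cons y ys')
    have "srt_run S (q, R) (x # xs) (y # ys') \<longleftrightarrow>
        (\<exists>q' R'. reg_step (trans S) (q, R) x y (q', R') \<and> srt_run S (q', R') xs ys')"
      using srt_step_iff_reg_step[OF assms(1) Cons.prems] by auto
    also have "\<dots> \<longleftrightarrow>
        (\<exists>q' R'. reg_step (trans S) (q, R) x y (q', R') \<and> reg_run (trans S) (q', R') xs ys')"
      using Cons.IH step_length by meson
    also have "\<dots> \<longleftrightarrow> reg_run (trans S) (q, R) (x # xs) (y # ys')"
      by auto
    finally show ?thesis using Cons by simp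
  qed simp
qed

lemma mem_srt_sem_iff:
  "z \<in> srt_sem S \<longleftrightarrow> srt_run S (init S, rinit S) (map fst z) (map snd z)"
  unfolding srt_sem_def
proof safe
  assume "srt_run S (init S, rinit S) (map fst z) (map snd z)"
  then show "\<exists>s t. z = zip s t \<and> length s = length t \<and> srt_run S (init S, rinit S) s t"
    by (intro exI[of _ "map fst z"] exI[of _ "map snd z"]) (simp add: zip_map_fst_snd)
qed simp

lemma srt_sem_eq_reg_run:
  assumes "wf_srt S"
  shows "srt_sem S = {z. reg_run (trans S) (init S, rinit S) (map fst z) (map snd z)}"
proof -
  have "length (rinit S) = nregs S" using assms by (simp add: wf_srt_def)
  note run_iff = srt_run_iff_reg_run[OF assms this]
  show ?thesis
    by (auto simp: mem_srt_sem_iff run_iff)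
qed

lemma rel_comp_Collect:
  assumes "\<And>xs ys. P xs ys \<Longrightarrow> length xs = length ys"
  shows "rel_comp {z. P (map fst z) (map snd z)} {z. Q (map fst z) (map snd z)} =
    {z. \<exists>ys. P (map fst z) ys \<and> Q ys (map snd z)}"
  unfolding rel_comp_def
proof safe
  fix z ys assume PQ: "P (map fst z) ys" "Q ys (map snd z)"
  moreover have "length ys = length z" using assms[OF PQ(1)] by simp
  ultimately show "\<exists>s1 s2. z = zip s1 s2 \<and> length s1 = length s2 \<and>
      (\<exists>s3. length s3 = length s1 \<and> zip s1 s3 \<in> {z. P (map fst z) (map snd z)} \<and>
         zip s3 s2 \<in> {z. Q (map fst z) (map snd z)})"
    by (intro exI[of _ "map fst z"] exI[of _ "map snd z"] conjI exI[of _ ys])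
      (auto simp: zip_map_fst_snd)
qed auto

definition map_trans_states :: "('s \<Rightarrow> 't) \<Rightarrow> 's \<times> 'a \<times> cmp list \<times> upd list \<times> nat \<times> 'b \<times> 's
    \<Rightarrow> 't \<times> 'a \<times> cmp list \<times> upd list \<times> nat \<times> 'b \<times> 't" where
  "map_trans_states h = (\<lambda>(q, \<sigma>, l, m, u, \<gamma>, q'). (h q, \<sigma>, l, m, u, \<gamma>, h q'))"

lemma reg_step_map_trans_states:
  assumes "inj h"
  shows "reg_step (map_trans_states h ` T) (h q, R) x y (s', R') \<longleftrightarrow>
    (\<exists>q'. s' = h q' \<and> reg_step T (q, R) x y (q', R'))"
  using injD[OF assms] by (cases x; cases y) (force simp: map_trans_states_def)

lemma reg_run_map_trans_states:
  assumes "inj h"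
  shows "reg_run (map_trans_states h ` T) (h q, R) xs ys \<longleftrightarrow> reg_run T (q, R) xs ys"
proof (induction xs arbitrary: q R ys)
  case Nil
  then show ?case by (cases ys) auto
next
  case (Cons x xs)
  then show ?case
    by (cases ys) (auto simp: reg_step_map_trans_states[OF assms] split_paired_Ex; blast)+
qed

definition srt_of :: "'s::countable set \<Rightarrow> 's \<Rightarrow> nat \<Rightarrow> 'd list
    \<Rightarrow> ('s \<times> 'a \<times> cmp list \<times> upd list \<times> nat \<times> 'b \<times> 's) set \<Rightarrow> ('a, 'b, 'd) srt" where
  "srt_of Q q0 k R0 T = \<lparr>states = to_nat ` Q, init = to_nat q0, nregs = k, rinit = R0,
     trans = map_trans_states to_nat ` T\<rparr>"

lemma srt_of_simps [simp]: "nregs (srt_of Q q0 k R0 T) = k" "rinit (srt_of Q q0 k R0 T) = R0"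
  by (simp_all add: srt_of_def)

lemma wf_srt_srt_ofI:
  assumes "finite Q" "q0 \<in> Q" "length R0 = k" "regs_wf k T"
    and "\<forall>(q, \<sigma>, l, m, u, \<gamma>, q') \<in> T. q \<in> Q \<and> q' \<in> Q"
  shows "wf_srt (srt_of Q q0 k R0 T)"
  using assms unfolding wf_srt_def srt_of_def regs_wf_def map_trans_states_def by fastforce

lemma add_free_srt_ofI:
  assumes "\<forall>(q, \<sigma>, l, m, u, \<gamma>, q') \<in> T. set m \<subseteq> {UOld, UNew}"
  shows "add_free (srt_of Q q0 k R0 T)"
  using assms unfolding add_free_def srt_of_def map_trans_states_def by fastforce

lemma srt_sem_srt_of:
  assumes "wf_srt (srt_of Q q0 k R0 T)"
  shows "srt_sem (srt_of Q q0 k R0 T) = {z. reg_run T (q0, R0) (map fst z) (map snd z)}"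
  unfolding srt_sem_eq_reg_run[OF assms]
  by (simp add: srt_of_def reg_run_map_trans_states[OF inj_to_nat])

lemma reg_step_cong:
  assumes "\<And>t. (q, t) \<in> T \<longleftrightarrow> (q, t) \<in> T'"
  shows "reg_step T (q, R) x y c' \<longleftrightarrow> reg_step T' (q, R) x y c'"
  using assms by (cases x; cases y; cases c') simp

section \<open>Union\<close>

lemma reg_run_start_choice:
  assumes "\<And>t. (s, t) \<in> T \<longleftrightarrow> (s1, t) \<in> T \<or> (s2, t) \<in> T"
  shows "reg_run T (s, R) xs ys \<longleftrightarrow> reg_run T (s1, R) xs ys \<or> reg_run T (s2, R) xs ys"
proof -
  have "reg_step T (s, R) x y c' \<longleftrightarrow> reg_step T (s1, R) x y c' \<or> reg_step T (s2, R) x y c'" for x y c'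
    using assms by (cases x; cases y; cases c') auto
  then show ?thesis
    by (cases xs; cases ys) auto
qed

definition block_trans :: "('s \<Rightarrow> 't) \<Rightarrow> nat \<Rightarrow> nat
    \<Rightarrow> ('s \<times> 'a \<times> cmp list \<times> upd list \<times> nat \<times> 'b \<times> 's) set
    \<Rightarrow> ('t \<times> 'a \<times> cmp list \<times> upd list \<times> nat \<times> 'b \<times> 't) set" where
  "block_trans h kl kr T =
     {(h q, \<sigma>, ll @ l @ lr, replicate kl UOld @ m @ replicate kr UOld, kl + u, \<gamma>, h q') |
        q \<sigma> l m u \<gamma> q' ll lr. (q, \<sigma>, l, m, u, \<gamma>, q') \<in> T \<and> length ll = kl \<and> length lr = kr}"

lemma block_transE:
  assumes "(s, \<sigma>, l, m, u, \<gamma>, s') \<in> block_trans h kl kr T"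
  obtains q l0 m0 u0 q' ll lr where "(q, \<sigma>, l0, m0, u0, \<gamma>, q') \<in> T" "s = h q" "s' = h q'"
    "l = ll @ l0 @ lr" "m = replicate kl UOld @ m0 @ replicate kr UOld" "u = kl + u0"
    "length ll = kl" "length lr = kr"
  using assms unfolding block_trans_def by blast

lemma block_trans_source: "(s, t) \<in> block_trans h kl kr T \<Longrightarrow> s \<in> range h"
  unfolding block_trans_def by blast

lemma block_transI:
  assumes "(q, \<sigma>, l, m, u, \<gamma>, q') \<in> T" "length ll = kl" "length lr = kr"
  shows "(h q, \<sigma>, ll @ l @ lr, replicate kl UOld @ m @ replicate kr UOld, kl + u, \<gamma>, h q')
    \<in> block_trans h kl kr T"
  using assms unfolding block_trans_def by blast

lemma map2_upd_val_block:
  assumes "length Rl = kl" "length Rr = kr" "length m = length R"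
  shows "map2 (\<lambda>c r. upd_val c r d) (replicate kl UOld @ m @ replicate kr UOld) (Rl @ R @ Rr) =
    Rl @ map2 (\<lambda>c r. upd_val c r d) m R @ Rr"
  using assms by (simp add: zip_append)

lemma reg_step_block_transD:
  assumes "inj h" "regs_wf (length R) T" "length Rl = kl" "length Rr = kr"
    and "reg_step (block_trans h kl kr T) (h q, Rl @ R @ Rr) (\<sigma>, d) (\<gamma>, w) (s', R'')"
  obtains q' R' where "reg_step T (q, R) (\<sigma>, d) (\<gamma>, w) (q', R')" "s' = h q'" "R'' = Rl @ R' @ Rr"
proof -
  obtain m u where "(h q, \<sigma>, map (cmp_of d) (Rl @ R @ Rr), m, u, \<gamma>, s') \<in> block_trans h kl kr T"
    and R'': "R'' = map2 (\<lambda>c r. upd_val c r d) m (Rl @ R @ Rr)" and w: "w = R'' ! u"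
    using assms(5) by auto
  then obtain q0 l m0 u0 q' ll lr where t: "(q0, \<sigma>, l, m0, u0, \<gamma>, q') \<in> T"
    and q0: "h q = h q0" and s': "s' = h q'" and ll: "length ll = kl" and lr: "length lr = kr"
    and l: "map (cmp_of d) (Rl @ R @ Rr) = ll @ l @ lr"
    and m: "m = replicate kl UOld @ m0 @ replicate kr UOld" and u: "u = kl + u0"
    by (elim block_transE) blast
  have lengths: "length l = length R" "length m0 = length R" "u0 < length R"
    using regs_wfD[OF assms(2) t] by simp_all
  have "q0 = q" using injD[OF assms(1) q0] by simp
  moreover have "l = map (cmp_of d) R"
    using l ll lr lengths(1) assms(3,4) by (auto simp: append_eq_append_conv)
  moreover have R''_eq: "R'' = Rl @ map2 (\<lambda>c r. upd_val c r d) m0 R @ Rr"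
    using R'' m map2_upd_val_block[OF assms(3,4) lengths(2)] by simp
  moreover have "w = map2 (\<lambda>c r. upd_val c r d) m0 R ! u0"
    using w u R''_eq lengths assms(3) by (simp add: nth_append)
  ultimately show thesis
    using that[of q' "map2 (\<lambda>c r. upd_val c r d) m0 R"] t s' by auto
qed

lemma reg_step_block_transI:
  assumes "regs_wf (length R) T" "length Rl = kl" "length Rr = kr"
    and "reg_step T (q, R) (\<sigma>, d) (\<gamma>, w) (q', R')"
  shows "reg_step (block_trans h kl kr T) (h q, Rl @ R @ Rr) (\<sigma>, d) (\<gamma>, w) (h q', Rl @ R' @ Rr)"
proof -
  obtain m u where t: "(q, \<sigma>, map (cmp_of d) R, m, u, \<gamma>, q') \<in> T"
    and R': "R' = map2 (\<lambda>c r. upd_val c r d) m R" and w: "w = R' ! u"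
    using assms(4) by auto
  have lengths: "length m = length R" "u < length R"
    using regs_wfD[OF assms(1) t] by simp_all
  have "(h q, \<sigma>, map (cmp_of d) (Rl @ R @ Rr), replicate kl UOld @ m @ replicate kr UOld,
      kl + u, \<gamma>, h q') \<in> block_trans h kl kr T"
    using block_transI[OF t, of "map (cmp_of d) Rl" kl "map (cmp_of d) Rr" kr h] assms(2,3) by simp
  moreover have "(Rl @ R' @ Rr) ! (kl + u) = w"
    using w R' lengths assms(2) by (simp add: nth_append)
  ultimately show ?thesis
    using R' map2_upd_val_block[OF assms(2,3) lengths(1)]
    by (auto intro!: exI[of _ "replicate kl UOld @ m @ replicate kr UOld"] exI[of _ "kl + u"])
qed

lemma reg_step_block_trans:
  assumes "inj h" "regs_wf (length R) T" "length Rl = kl" "length Rr = kr"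
  shows "reg_step (block_trans h kl kr T) (h q, Rl @ R @ Rr) x y (s', R'') \<longleftrightarrow>
    (\<exists>q' R'. reg_step T (q, R) x y (q', R') \<and> s' = h q' \<and> R'' = Rl @ R' @ Rr)"
proof -
  obtain \<sigma> d \<gamma> w where xy: "x = (\<sigma>, d)" "y = (\<gamma>, w)" by fastforce
  show ?thesis
  proof
    assume "reg_step (block_trans h kl kr T) (h q, Rl @ R @ Rr) x y (s', R'')"
    then show "\<exists>q' R'. reg_step T (q, R) x y (q', R') \<and> s' = h q' \<and> R'' = Rl @ R' @ Rr"
      unfolding xy by (elim reg_step_block_transD[OF assms]) blast
  next
    assume "\<exists>q' R'. reg_step T (q, R) x y (q', R') \<and> s' = h q' \<and> R'' = Rl @ R' @ Rr"
    then show "reg_step (block_trans h kl kr T) (h q, Rl @ R @ Rr) x y (s', R'')"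
      unfolding xy using reg_step_block_transI[OF assms(2-4)] by blast
  qed
qed

lemma reg_run_block_trans:
  assumes "inj h" "regs_wf (length R) T" "length Rl = kl" "length Rr = kr"
    and "\<And>q t. (h q, t) \<in> U \<longleftrightarrow> (h q, t) \<in> block_trans h kl kr T"
  shows "reg_run U (h q, Rl @ R @ Rr) xs ys \<longleftrightarrow> reg_run T (q, R) xs ys"
  using assms(2)
proof (induction xs arbitrary: q R ys)
  case Nil
  then show ?case by (cases ys) auto
next
  case (Cons x xs)
  show ?case
  proof (cases ys)
    case (Cons y ys')
    have "reg_run U (h q, Rl @ R @ Rr) (x # xs) (y # ys') \<longleftrightarrow>
        (\<exists>s' R''. reg_step (block_trans h kl kr T) (h q, Rl @ R @ Rr) x y (s', R'') \<and>
          reg_run U (s', R'') xs ys')"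
      by (simp only: reg_run.simps split_paired_Ex reg_step_cong[OF assms(5)])
    also have "\<dots> \<longleftrightarrow> (\<exists>q' R'. reg_step T (q, R) x y (q', R') \<and> reg_run U (h q', Rl @ R' @ Rr) xs ys')"
      unfolding reg_step_block_trans[OF assms(1) Cons.prems assms(3,4)] by blast
    also have "\<dots> \<longleftrightarrow> (\<exists>q' R'. reg_step T (q, R) x y (q', R') \<and> reg_run T (q', R') xs ys')"
      using Cons.IH Cons.prems reg_step_length by (metis (no_types, lifting))
    finally show ?thesis using Cons by simp
  qed simp
qed

definition union_trans :: "('a, 'b, 'd) srt \<Rightarrow> ('a, 'b, 'd) srt
    \<Rightarrow> ((nat + nat) option \<times> 'a \<times> cmp list \<times> upd list \<times> nat \<times> 'b \<times> (nat + nat) option) set" where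
  "union_trans S1 S2 =
     block_trans (Some \<circ> Inl) 0 (nregs S2) (trans S1) \<union>
     block_trans (Some \<circ> Inr) (nregs S1) 0 (trans S2) \<union>
     {(None, t) | t. (Some (Inl (init S1)), t) \<in> block_trans (Some \<circ> Inl) 0 (nregs S2) (trans S1) \<or>
        (Some (Inr (init S2)), t) \<in> block_trans (Some \<circ> Inr) (nregs S1) 0 (trans S2)}"

definition union_srt :: "('a, 'b, 'd) srt \<Rightarrow> ('a, 'b, 'd) srt \<Rightarrow> ('a, 'b, 'd) srt" where
  "union_srt S1 S2 = srt_of (insert None (Some ` (Inl ` states S1 \<union> Inr ` states S2))) None
     (nregs S1 + nregs S2) (rinit S1 @ rinit S2) (union_trans S1 S2)"

lemma union_trans_cases:
  assumes "(s, \<sigma>, l, m, u, \<gamma>, s') \<in> union_trans S1 S2"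
  obtains s0 where "(s0, \<sigma>, l, m, u, \<gamma>, s') \<in> block_trans (Some \<circ> Inl) 0 (nregs S2) (trans S1)"
    "s = None \<or> s = s0"
  | s0 where "(s0, \<sigma>, l, m, u, \<gamma>, s') \<in> block_trans (Some \<circ> Inr) (nregs S1) 0 (trans S2)"
    "s = None \<or> s = s0"
  using assms unfolding union_trans_def by blast

lemma wf_srt_union_srt:
  assumes "wf_srt S1" "wf_srt S2"
  shows "wf_srt (union_srt S1 S2)"
  unfolding union_srt_def
proof (rule wf_srt_srt_ofI)
  show "finite (insert None (Some ` (Inl ` states S1 \<union> Inr ` states S2)))"
    using assms by (simp add: wf_srt_def)
  show "length (rinit S1 @ rinit S2) = nregs S1 + nregs S2"
    using assms by (simp add: wf_srt_def)
  show "regs_wf (nregs S1 + nregs S2) (union_trans S1 S2)"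
    unfolding regs_wf_def
    by (auto elim!: union_trans_cases block_transE
        dest!: regs_wfD[OF wf_srt_regs_wf[OF assms(1)]] regs_wfD[OF wf_srt_regs_wf[OF assms(2)]])
  show "\<forall>(s, \<sigma>, l, m, u, \<gamma>, s') \<in> union_trans S1 S2.
      s \<in> insert None (Some ` (Inl ` states S1 \<union> Inr ` states S2)) \<and>
      s' \<in> insert None (Some ` (Inl ` states S1 \<union> Inr ` states S2))"
    using assms unfolding wf_srt_def by (fastforce elim!: union_trans_cases block_transE)
qed simp

lemma add_free_union_srt:
  assumes "add_free S1" "add_free S2"
  shows "add_free (union_srt S1 S2)"
  unfolding union_srt_def
  by (rule add_free_srt_ofI)
    (use assms in \<open>fastforce simp: add_free_def elim!: union_trans_cases block_transE\<close>)

lemma srt_sem_union_srt: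
  assumes "wf_srt S1" "wf_srt S2"
  shows "srt_sem (union_srt S1 S2) = srt_sem S1 \<union> srt_sem S2"
proof -
  have lengths: "length (rinit S1) = nregs S1" "length (rinit S2) = nregs S2"
    using assms by (simp_all add: wf_srt_def)
  have left: "reg_run (union_trans S1 S2) (Some (Inl q), [] @ rinit S1 @ rinit S2) xs ys \<longleftrightarrow>
      reg_run (trans S1) (q, rinit S1) xs ys" for q xs ys
    by (rule reg_run_block_trans[where h = "Some \<circ> Inl", simplified])
      (auto simp: lengths wf_srt_regs_wf[OF assms(1)] inj_def union_trans_def dest: block_trans_source)
  have right: "reg_run (union_trans S1 S2) (Some (Inr q), rinit S1 @ rinit S2 @ []) xs ys \<longleftrightarrow>
      reg_run (trans S2) (q, rinit S2) xs ys" for q xs ys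
    by (rule reg_run_block_trans[where h = "Some \<circ> Inr", simplified])
      (auto simp: lengths wf_srt_regs_wf[OF assms(2)] inj_def union_trans_def dest: block_trans_source)
  have start: "reg_run (union_trans S1 S2) (None, R) xs ys \<longleftrightarrow>
      reg_run (union_trans S1 S2) (Some (Inl (init S1)), R) xs ys \<or>
      reg_run (union_trans S1 S2) (Some (Inr (init S2)), R) xs ys" for R xs ys
    by (rule reg_run_start_choice) (auto simp: union_trans_def dest: block_trans_source)
  show ?thesis
    using wf_srt_union_srt[OF assms] unfolding union_srt_def
    by (auto simp: srt_sem_srt_of srt_sem_eq_reg_run[OF assms(1)] srt_sem_eq_reg_run[OF assms(2)]
        start left[simplified] right[simplified])
qed

section \<open>A shared pool of registers\<close>

definition fresh_slot :: "nat list \<Rightarrow> nat" where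
  "fresh_slot ps = (LEAST a. a \<notin> set ps)"

lemma ex_le_length_notin_set: "\<exists>a \<le> length ps. a \<notin> set ps"
proof (rule ccontr)
  assume "\<not> ?thesis"
  then have "card {..length ps} \<le> card (set ps)" by (intro card_mono) auto
  then show False using card_length[of ps] by simp
qed

lemma fresh_slot_notin: "fresh_slot ps \<notin> set ps"
  using ex_le_length_notin_set[of ps] unfolding fresh_slot_def by (metis LeastI)

lemma fresh_slot_le_length: "fresh_slot ps \<le> length ps"
  using ex_le_length_notin_set[of ps] unfolding fresh_slot_def by (metis Least_le le_trans)

definition cmp_matrix :: "'d::linorder list \<Rightarrow> cmp list list" where
  "cmp_matrix R = map (\<lambda>x. map (cmp_of x) R) R"

lemma cmp_matrix_shape:
  "length (cmp_matrix R) = length R" "\<forall>r \<in> set (cmp_matrix R). length r = length R"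
  by (auto simp: cmp_matrix_def)

lemma cmp_matrix_nth: "a < length R \<Longrightarrow> b < length R \<Longrightarrow> cmp_matrix R ! a ! b = cmp_of (R ! a) (R ! b)"
  by (simp add: cmp_matrix_def)

definition cmp_matrix_upd :: "cmp list list \<Rightarrow> cmp list \<Rightarrow> nat \<Rightarrow> cmp list list" where
  "cmp_matrix_upd M l f = map (\<lambda>a. map (\<lambda>b.
     if a = f then (if b = f then CEq else l ! b) else if b = f then flip_cmp (l ! a) else M ! a ! b)
     [0..<length l]) [0..<length l]"

lemma cmp_matrix_upd_shape:
  "length (cmp_matrix_upd M l f) = length l" "\<forall>r \<in> set (cmp_matrix_upd M l f). length r = length l"
  by (auto simp: cmp_matrix_upd_def)

lemma cmp_matrix_upd_cmp_matrix:
  assumes "f < length R"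
  shows "cmp_matrix_upd (cmp_matrix R) (map (cmp_of d) R) f = cmp_matrix (R[f := d])"
  using assms
  by (intro nth_equalityI) (auto simp: cmp_matrix_upd_def cmp_matrix_def nth_list_update flip_cmp_of)

definition ptr_update :: "nat \<Rightarrow> upd list \<Rightarrow> nat list \<Rightarrow> nat list" where
  "ptr_update a m p = map2 (\<lambda>c b. if c = UNew then a else b) m p"

lemma set_ptr_update: "set (ptr_update a m p) \<subseteq> insert a (set p)"
  unfolding ptr_update_def by (auto dest!: set_zip_rightD)

lemma map_nth_ptr_update:
  assumes "set m \<subseteq> {UOld, UNew}"
  shows "map ((!) R) (ptr_update a m p) = map2 (\<lambda>c r. upd_val c r (R ! a)) m (map ((!) R) p)"
  using assms unfolding ptr_update_def
  by (intro nth_equalityI) (auto simp: subset_iff dest!: nth_mem)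

definition slot_write :: "nat \<Rightarrow> nat \<Rightarrow> upd list" where
  "slot_write f n = (replicate n UOld)[f := UNew]"

lemma map2_upd_val_slot_write:
  "length R = n \<Longrightarrow> map2 (\<lambda>c r. upd_val c r d) (slot_write f n) R = R[f := d]"
  unfolding slot_write_def
proof (intro nth_equalityI)
  fix i
  assume "length R = n" "i < length (map2 (\<lambda>c r. upd_val c r d) ((replicate n UOld)[f := UNew]) R)"
  then show "map2 (\<lambda>c r. upd_val c r d) ((replicate n UOld)[f := UNew]) R ! i = R[f := d] ! i"
    by (cases "i = f") simp_all
qed simp

lemma reg_step_slots:
  assumes "wf_srt S" "add_free S" "length p = nregs S" "set p \<subseteq> {..<length R}" "a < length R"
  shows "reg_step (trans S) (q, map ((!) R) p) (\<sigma>, R ! a) (\<gamma>, w) (q', Rs) \<longleftrightarrow>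
    (\<exists>m u. (q, \<sigma>, map ((!) (cmp_matrix R ! a)) p, m, u, \<gamma>, q') \<in> trans S \<and>
       Rs = map ((!) R) (ptr_update a m p) \<and> w = R ! (ptr_update a m p ! u))"
proof -
  have guard: "map (cmp_of (R ! a)) (map ((!) R) p) = map ((!) (cmp_matrix R ! a)) p"
    using assms(4,5) by (auto simp: cmp_matrix_nth)
  have upd: "map2 (\<lambda>c r. upd_val c r (R ! a)) m (map ((!) R) p) = map ((!) R) (ptr_update a m p)"
    and out: "map ((!) R) (ptr_update a m p) ! u = R ! (ptr_update a m p ! u)"
    if "(q, \<sigma>, map ((!) (cmp_matrix R ! a)) p, m, u, \<gamma>, q') \<in> trans S" for m u
  proof -
    have "length m = length p" "u < length p" "set m \<subseteq> {UOld, UNew}"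
      using regs_wfD[OF wf_srt_regs_wf[OF assms(1)] that] assms(2,3) that
      by (auto simp: add_free_def)
    then show "map2 (\<lambda>c r. upd_val c r (R ! a)) m (map ((!) R) p) = map ((!) R) (ptr_update a m p)"
      and "map ((!) R) (ptr_update a m p) ! u = R ! (ptr_update a m p ! u)"
      by (simp add: map_nth_ptr_update, simp add: ptr_update_def)
  qed
  show ?thesis
    unfolding reg_step.simps guard using upd out by (intro iffI; elim exE conjE; intro exI conjI) auto
qed

(* (q1, q2, p1, p2, M): the states of the two simulated SRTs, the pool slots holding their
   registers, and the comparison matrix of the pool. *)
type_synonym pool_state = "nat \<times> nat \<times> nat list \<times> nat list \<times> cmp list list"

definition pool_size :: "('a, 'b, 'd) srt \<Rightarrow> ('e, 'c, 'd) srt \<Rightarrow> nat" where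
  "pool_size S1 S2 = Suc (nregs S1 + nregs S2)"

definition pool_states :: "('a, 'b, 'd) srt \<Rightarrow> ('e, 'c, 'd) srt \<Rightarrow> pool_state set" where
  "pool_states S1 S2 = {(q1, q2, p1, p2, M). q1 \<in> states S1 \<and> q2 \<in> states S2 \<and>
     length p1 = nregs S1 \<and> length p2 = nregs S2 \<and> set (p1 @ p2) \<subseteq> {..<pool_size S1 S2} \<and>
     length M = pool_size S1 S2 \<and> (\<forall>r \<in> set M. length r = pool_size S1 S2)}"

lemma finite_pool_states:
  assumes "finite (states S1)" "finite (states S2)"
  shows "finite (pool_states S1 S2)"
proof -
  let ?N = "pool_size S1 S2"
  let ?P = "\<lambda>k. {p. set p \<subseteq> {..<?N} \<and> length p = k}"
  have "finite {M. set M \<subseteq> {r. set r \<subseteq> (UNIV :: cmp set) \<and> length r = ?N} \<and> length M = ?N}"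
    by (intro finite_lists_length_eq) (simp add: finite_lists_length_eq)
  then have "finite (states S1 \<times> states S2 \<times> ?P (nregs S1) \<times> ?P (nregs S2) \<times>
      {M. set M \<subseteq> {r. set r \<subseteq> (UNIV :: cmp set) \<and> length r = ?N} \<and> length M = ?N})"
    using assms by (intro finite_cartesian_product finite_lists_length_eq) auto
  then show ?thesis
    by (rule finite_subset[rotated]) (auto simp: pool_states_def)
qed

fun pool_inv :: "('a, 'b, 'd::linorder) srt \<Rightarrow> ('e, 'c, 'd) srt \<Rightarrow> pool_state \<Rightarrow> 'd list \<Rightarrow> bool" where
  "pool_inv S1 S2 (q1, q2, p1, p2, M) R \<longleftrightarrow>
     (q1, q2, p1, p2, M) \<in> pool_states S1 S2 \<and> length R = pool_size S1 S2 \<and> M = cmp_matrix R"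

lemma pool_fresh_slot:
  assumes "pool_inv S1 S2 (q1, q2, p1, p2, M) R" "f = fresh_slot (p1 @ p2)"
  shows "f < length R" "f \<notin> set p1" "f \<notin> set p2"
    and "map ((!) (R[f := d])) p1 = map ((!) R) p1" "map ((!) (R[f := d])) p2 = map ((!) R) p2"
    and "cmp_matrix_upd M (map (cmp_of d) R) f = cmp_matrix (R[f := d])"
proof -
  show "f \<notin> set p1" "f \<notin> set p2" using fresh_slot_notin[of "p1 @ p2"] assms(2) by auto
  then show "map ((!) (R[f := d])) p1 = map ((!) R) p1" "map ((!) (R[f := d])) p2 = map ((!) R) p2"
    by (auto intro!: nth_list_update_neq)
  show "f < length R"
    using fresh_slot_le_length[of "p1 @ p2"] assms by (simp add: pool_states_def pool_size_def)
  then show "cmp_matrix_upd M (map (cmp_of d) R) f = cmp_matrix (R[f := d])"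
    using assms(1) by (simp add: cmp_matrix_upd_cmp_matrix)
qed

lemma pool_reg_step:
  assumes inv: "pool_inv S1 S2 (q1, q2, p1, p2, M) R" and f: "f = fresh_slot (p1 @ p2)"
    and a: "a < length R" and v: "v = R[f := d] ! a"
  shows "wf_srt S1 \<Longrightarrow> add_free S1 \<Longrightarrow>
      reg_step (trans S1) (q1, map ((!) R) p1) (\<sigma>, v) (\<gamma>, w) (q1', Rs) \<longleftrightarrow>
      (\<exists>m u. (q1, \<sigma>, map ((!) (cmp_matrix (R[f := d]) ! a)) p1, m, u, \<gamma>, q1') \<in> trans S1 \<and>
        Rs = map ((!) (R[f := d])) (ptr_update a m p1) \<and> w = R[f := d] ! (ptr_update a m p1 ! u))"
    and "wf_srt S2 \<Longrightarrow> add_free S2 \<Longrightarrow>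
      reg_step (trans S2) (q2, map ((!) R) p2) (\<sigma>', v) (\<gamma>', w) (q2', Rs) \<longleftrightarrow>
      (\<exists>m u. (q2, \<sigma>', map ((!) (cmp_matrix (R[f := d]) ! a)) p2, m, u, \<gamma>', q2') \<in> trans S2 \<and>
        Rs = map ((!) (R[f := d])) (ptr_update a m p2) \<and> w = R[f := d] ! (ptr_update a m p2 ! u))"
proof -
  have ps: "length p1 = nregs S1" "length p2 = nregs S2"
    "set p1 \<subseteq> {..<length (R[f := d])}" "set p2 \<subseteq> {..<length (R[f := d])}"
    using inv by (auto simp: pool_states_def)
  have keep: "map ((!) (R[f := d])) p1 = map ((!) R) p1" "map ((!) (R[f := d])) p2 = map ((!) R) p2"
    by (rule pool_fresh_slot(4)[OF inv f], rule pool_fresh_slot(5)[OF inv f])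
  have a': "a < length (R[f := d])" using a by simp
  show "reg_step (trans S1) (q1, map ((!) R) p1) (\<sigma>, v) (\<gamma>, w) (q1', Rs) \<longleftrightarrow>
      (\<exists>m u. (q1, \<sigma>, map ((!) (cmp_matrix (R[f := d]) ! a)) p1, m, u, \<gamma>, q1') \<in> trans S1 \<and>
        Rs = map ((!) (R[f := d])) (ptr_update a m p1) \<and> w = R[f := d] ! (ptr_update a m p1 ! u))"
    if "wf_srt S1" "add_free S1"
    unfolding v keep(1)[symmetric] by (rule reg_step_slots[OF that ps(1,3) a'])
  show "reg_step (trans S2) (q2, map ((!) R) p2) (\<sigma>', v) (\<gamma>', w) (q2', Rs) \<longleftrightarrow>
      (\<exists>m u. (q2, \<sigma>', map ((!) (cmp_matrix (R[f := d]) ! a)) p2, m, u, \<gamma>', q2') \<in> trans S2 \<and>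
        Rs = map ((!) (R[f := d])) (ptr_update a m p2) \<and> w = R[f := d] ! (ptr_update a m p2 ! u))"
    if "wf_srt S2" "add_free S2"
    unfolding v keep(2)[symmetric] by (rule reg_step_slots[OF that ps(2,4) a'])
qed

lemma pool_states_next:
  assumes "(q1, q2, p1, p2, M) \<in> pool_states S1 S2" "wf_srt S1" "wf_srt S2"
    and "(q1, \<sigma>1, l1, m1, u1, \<gamma>1, q1') \<in> trans S1" "(q2, \<sigma>2, l2, m2, u2, \<gamma>2, q2') \<in> trans S2"
    and "a1 < pool_size S1 S2" "a2 < pool_size S1 S2"
    and "length M' = pool_size S1 S2" "\<forall>r \<in> set M'. length r = pool_size S1 S2"
  shows "(q1', q2', ptr_update a1 m1 p1, ptr_update a2 m2 p2, M') \<in> pool_states S1 S2"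
proof -
  have "length m1 = nregs S1" "length m2 = nregs S2" "q1' \<in> states S1" "q2' \<in> states S2"
    using assms(2-5) unfolding wf_srt_def by fast+
  then show ?thesis
    using assms(1,6-9) set_ptr_update[of a1 m1 p1] set_ptr_update[of a2 m2 p2]
    by (fastforce simp: pool_states_def ptr_update_def)
qed

(* The spare slot starts at 0, so that zero-initialised SRTs yield a zero-initialised pool. *)
definition pool_regs0 :: "('a, 'b, 'd::zero) srt \<Rightarrow> ('e, 'c, 'd) srt \<Rightarrow> 'd list" where
  "pool_regs0 S1 S2 = rinit S1 @ rinit S2 @ [0]"

definition pool_init :: "('a, 'b, 'd::{zero,linorder}) srt \<Rightarrow> ('e, 'c, 'd) srt \<Rightarrow> pool_state" where
  "pool_init S1 S2 = (init S1, init S2, [0..<nregs S1], [nregs S1..<nregs S1 + nregs S2],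
     cmp_matrix (pool_regs0 S1 S2))"

lemma pool_inv_init:
  assumes "wf_srt S1" "wf_srt S2"
  shows "pool_inv S1 S2 (pool_init S1 S2) (pool_regs0 S1 S2)"
    and "map ((!) (pool_regs0 S1 S2)) [0..<nregs S1] = rinit S1"
    and "map ((!) (pool_regs0 S1 S2)) [nregs S1..<nregs S1 + nregs S2] = rinit S2"
proof -
  have lengths: "length (rinit S1) = nregs S1" "length (rinit S2) = nregs S2"
    and "init S1 \<in> states S1" "init S2 \<in> states S2"
    using assms by (simp_all add: wf_srt_def)
  then show "pool_inv S1 S2 (pool_init S1 S2) (pool_regs0 S1 S2)"
    by (auto simp: pool_init_def pool_regs0_def pool_states_def pool_size_def cmp_matrix_def)
  show "map ((!) (pool_regs0 S1 S2)) [0..<nregs S1] = rinit S1"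
    and "map ((!) (pool_regs0 S1 S2)) [nregs S1..<nregs S1 + nregs S2] = rinit S2"
    by (intro nth_equalityI; simp add: pool_regs0_def lengths nth_append)+
qed

lemma nth_ptr_update_less:
  assumes "(q, \<sigma>, l, m, u, \<gamma>, q') \<in> T" "regs_wf (length p) T" "set p \<subseteq> {..<n}" "a < n"
  shows "ptr_update a m p ! u < n"
proof -
  have "u < length p" "length m = length p"
    using regs_wfD[OF assms(2,1)] by simp_all
  then have "ptr_update a m p ! u \<in> insert a (set p)"
    using set_ptr_update[of a m p] by (auto simp: ptr_update_def)
  then show ?thesis
    using assms(3,4) by auto
qed

lemma pool_slot_less:
  assumes "(q1, q2, p1, p2, M) \<in> pool_states S1 S2" "wf_srt S1" "wf_srt S2" "a < pool_size S1 S2"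
  shows "(q1, \<sigma>, l, m, u, \<gamma>, q1') \<in> trans S1 \<Longrightarrow> ptr_update a m p1 ! u < pool_size S1 S2"
    and "(q2, \<sigma>', l', m', u', \<gamma>', q2') \<in> trans S2 \<Longrightarrow> ptr_update a m' p2 ! u' < pool_size S1 S2"
  using assms nth_ptr_update_less[of _ _ l m u _ _ "trans S1" p1]
    nth_ptr_update_less[of _ _ l' m' u' _ _ "trans S2" p2]
  by (auto simp: pool_states_def wf_srt_regs_wf)

section \<open>Composition\<close>

inductive_set comp_trans :: "('a, 'b, 'd) srt \<Rightarrow> ('b, 'c, 'd) srt
    \<Rightarrow> (pool_state \<times> 'a \<times> cmp list \<times> upd list \<times> nat \<times> 'c \<times> pool_state) set"
  for S1 S2 where
  comp_transI: "\<lbrakk>(q1, q2, p1, p2, M) \<in> pool_states S1 S2; length l = pool_size S1 S2;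
    f = fresh_slot (p1 @ p2); M' = cmp_matrix_upd M l f;
    (q1, \<sigma>, map ((!) (M' ! f)) p1, m1, u1, \<gamma>, q1') \<in> trans S1; p1' = ptr_update f m1 p1;
    (q2, \<gamma>, map ((!) (M' ! (p1' ! u1))) p2, m2, u2, \<theta>, q2') \<in> trans S2;
    p2' = ptr_update (p1' ! u1) m2 p2\<rbrakk>
   \<Longrightarrow> ((q1, q2, p1, p2, M), \<sigma>, l, slot_write f (pool_size S1 S2), p2' ! u2, \<theta>, (q1', q2', p1', p2', M'))
      \<in> comp_trans S1 S2"

definition comp_srt ::
    "('a, 'b, 'd::{linorder,group_add}) srt \<Rightarrow> ('b, 'c, 'd) srt \<Rightarrow> ('a, 'c, 'd) srt" where
  "comp_srt S1 S2 = srt_of (pool_states S1 S2) (pool_init S1 S2) (pool_size S1 S2) (pool_regs0 S1 S2)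
     (comp_trans S1 S2)"

context
  fixes S1 :: "('a, 'b, 'd::{linorder,group_add}) srt" and S2 :: "('b, 'c, 'd) srt"
  assumes wf1: "wf_srt S1" and wf2: "wf_srt S2" and af1: "add_free S1" and af2: "add_free S2"
begin

lemma comp_transD:
  assumes "((q1, q2, p1, p2, M), \<sigma>, l, m, u, \<theta>, (q1', q2', p1', p2', M')) \<in> comp_trans S1 S2"
  shows "(q1, q2, p1, p2, M) \<in> pool_states S1 S2 \<and> (q1', q2', p1', p2', M') \<in> pool_states S1 S2 \<and>
    length l = pool_size S1 S2 \<and> length m = pool_size S1 S2 \<and> u < pool_size S1 S2 \<and>
    set m \<subseteq> {UOld, UNew}"
proof -
  from assms obtain f \<gamma> m1 u1 m2 u2 where src: "(q1, q2, p1, p2, M) \<in> pool_states S1 S2"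
    and l: "length l = pool_size S1 S2" and f: "f = fresh_slot (p1 @ p2)"
    and M': "M' = cmp_matrix_upd M l f"
    and t1: "(q1, \<sigma>, map ((!) (M' ! f)) p1, m1, u1, \<gamma>, q1') \<in> trans S1"
    and p1': "p1' = ptr_update f m1 p1"
    and t2: "(q2, \<gamma>, map ((!) (M' ! (p1' ! u1))) p2, m2, u2, \<theta>, q2') \<in> trans S2"
    and p2': "p2' = ptr_update (p1' ! u1) m2 p2"
    and m: "m = slot_write f (pool_size S1 S2)" and u: "u = p2' ! u2"
    by (cases rule: comp_trans.cases) auto
  have f_less: "f < pool_size S1 S2"
    using fresh_slot_le_length[of "p1 @ p2"] src f by (auto simp: pool_states_def pool_size_def)
  moreover have "p1' ! u1 < pool_size S1 S2"
    using pool_slot_less(1)[OF src wf1 wf2 f_less t1] p1' by simp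
  ultimately have target: "(q1', q2', p1', p2', M') \<in> pool_states S1 S2"
    using pool_states_next[OF src wf1 wf2 t1 t2] p1' p2' M' l cmp_matrix_upd_shape[of M l f] by auto
  then have "u < pool_size S1 S2"
    using pool_slot_less(2)[OF src wf1 wf2 \<open>p1' ! u1 < _\<close> t2] p2' u by simp
  moreover have "set m \<subseteq> {UOld, UNew}"
    using m set_update_subset_insert[of "replicate (pool_size S1 S2) UOld" f UNew]
    by (auto simp: slot_write_def)
  ultimately show ?thesis
    using src target l m by (simp add: slot_write_def)
qed

lemma comp_step_sound:
  assumes inv: "pool_inv S1 S2 (q1, q2, p1, p2, M) R"
    and step: "reg_step (comp_trans S1 S2) ((q1, q2, p1, p2, M), R) (\<sigma>, d) (\<theta>, w)
      ((q1', q2', p1', p2', M'), R')"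
  shows "pool_inv S1 S2 (q1', q2', p1', p2', M') R'"
    and "\<exists>y. reg_step (trans S1) (q1, map ((!) R) p1) (\<sigma>, d) y (q1', map ((!) R') p1') \<and>
      reg_step (trans S2) (q2, map ((!) R) p2) y (\<theta>, w) (q2', map ((!) R') p2')"
proof -
  from step obtain m u where
    "((q1, q2, p1, p2, M), \<sigma>, map (cmp_of d) R, m, u, \<theta>, (q1', q2', p1', p2', M')) \<in> comp_trans S1 S2"
    and R': "R' = map2 (\<lambda>c r. upd_val c r d) m R" and w: "w = R' ! u"
    by auto
  then obtain f \<gamma> m1 u1 m2 u2 where f: "f = fresh_slot (p1 @ p2)"
    and M': "M' = cmp_matrix_upd M (map (cmp_of d) R) f"
    and t1: "(q1, \<sigma>, map ((!) (M' ! f)) p1, m1, u1, \<gamma>, q1') \<in> trans S1"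
    and p1': "p1' = ptr_update f m1 p1"
    and t2: "(q2, \<gamma>, map ((!) (M' ! (p1' ! u1))) p2, m2, u2, \<theta>, q2') \<in> trans S2"
    and p2': "p2' = ptr_update (p1' ! u1) m2 p2"
    and m: "m = slot_write f (pool_size S1 S2)" and u: "u = p2' ! u2"
    by (cases rule: comp_trans.cases) auto
  note fresh = pool_fresh_slot[OF inv f]
  have R'_eq: "R' = R[f := d]" using R' m inv by (simp add: map2_upd_val_slot_write)
  have M'_eq: "M' = cmp_matrix R'" using M' fresh(6) R'_eq by simp
  have d: "d = R[f := d] ! f" using fresh(1) by simp
  have a_less: "p1' ! u1 < length R"
    using pool_slot_less(1)[OF _ wf1 wf2 _ t1] inv fresh(1) p1' by auto
  have "reg_step (trans S1) (q1, map ((!) R) p1) (\<sigma>, d) (\<gamma>, R' ! (p1' ! u1)) (q1', map ((!) R') p1')"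
    unfolding pool_reg_step(1)[OF inv f fresh(1) d wf1 af1, folded R'_eq] using t1 M'_eq p1' by blast
  moreover have
    "reg_step (trans S2) (q2, map ((!) R) p2) (\<gamma>, R' ! (p1' ! u1)) (\<theta>, w) (q2', map ((!) R') p2')"
    unfolding pool_reg_step(2)[where d = d, OF inv f a_less refl wf2 af2, folded R'_eq]
    using t2 M'_eq p2' u w by blast
  ultimately show "\<exists>y. reg_step (trans S1) (q1, map ((!) R) p1) (\<sigma>, d) y (q1', map ((!) R') p1') \<and>
      reg_step (trans S2) (q2, map ((!) R) p2) y (\<theta>, w) (q2', map ((!) R') p2')"
    by blast
  show "pool_inv S1 S2 (q1', q2', p1', p2', M') R'"
    using pool_states_next[OF _ wf1 wf2 t1 t2, of p1 p2 M f "p1' ! u1" M'] inv fresh(1) a_less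
      R'_eq M'_eq p1' p2' cmp_matrix_shape[of R']
    by auto
qed

lemma comp_step_complete:
  assumes inv: "pool_inv S1 S2 (q1, q2, p1, p2, M) R"
    and step1: "reg_step (trans S1) (q1, map ((!) R) p1) (\<sigma>, d) (\<gamma>, v) (q1', R1')"
    and step2: "reg_step (trans S2) (q2, map ((!) R) p2) (\<gamma>, v) (\<theta>, w) (q2', R2')"
  obtains p1' p2' M' R' where
    "reg_step (comp_trans S1 S2) ((q1, q2, p1, p2, M), R) (\<sigma>, d) (\<theta>, w) ((q1', q2', p1', p2', M'), R')"
    "pool_inv S1 S2 (q1', q2', p1', p2', M') R'" "R1' = map ((!) R') p1'" "R2' = map ((!) R') p2'"
proof -
  define f where "f = fresh_slot (p1 @ p2)"
  define R' where "R' = R[f := d]"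
  note fresh = pool_fresh_slot[OF inv f_def]
  have d: "d = R[f := d] ! f" using fresh(1) by simp
  from step1 obtain m1 u1
    where t1: "(q1, \<sigma>, map ((!) (cmp_matrix R' ! f)) p1, m1, u1, \<gamma>, q1') \<in> trans S1"
    and R1': "R1' = map ((!) R') (ptr_update f m1 p1)" and v: "v = R' ! (ptr_update f m1 p1 ! u1)"
    unfolding pool_reg_step(1)[OF inv f_def fresh(1) d wf1 af1, folded R'_def] by blast
  define p1' where "p1' = ptr_update f m1 p1"
  have a_less: "p1' ! u1 < length R"
    using pool_slot_less(1)[OF _ wf1 wf2 _ t1] inv fresh(1) by (auto simp: p1'_def)
  from step2 obtain m2 u2 where
    t2: "(q2, \<gamma>, map ((!) (cmp_matrix R' ! (p1' ! u1))) p2, m2, u2, \<theta>, q2') \<in> trans S2"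
    and R2': "R2' = map ((!) R') (ptr_update (p1' ! u1) m2 p2)"
    and w: "w = R' ! (ptr_update (p1' ! u1) m2 p2 ! u2)"
    unfolding pool_reg_step(2)[OF inv f_def a_less v[unfolded R'_def p1'_def[symmetric]] wf2 af2,
        folded R'_def]
    by blast
  define p2' where "p2' = ptr_update (p1' ! u1) m2 p2"
  have "((q1, q2, p1, p2, M), \<sigma>, map (cmp_of d) R, slot_write f (pool_size S1 S2), p2' ! u2, \<theta>,
      (q1', q2', p1', p2', cmp_matrix R')) \<in> comp_trans S1 S2"
    by (rule comp_transI[OF _ _ f_def _ t1 p1'_def t2 p2'_def])
      (use inv fresh(6) in \<open>auto simp: R'_def\<close>)
  then have "reg_step (comp_trans S1 S2) ((q1, q2, p1, p2, M), R) (\<sigma>, d) (\<theta>, w)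
      ((q1', q2', p1', p2', cmp_matrix R'), R')"
    using inv w
    by (auto simp: map2_upd_val_slot_write R'_def p2'_def
        intro!: exI[of _ "slot_write f (pool_size S1 S2)"] exI[of _ "p2' ! u2"])
  moreover have "pool_inv S1 S2 (q1', q2', p1', p2', cmp_matrix R') R'"
    using pool_states_next[OF _ wf1 wf2 t1 t2, of p1 p2 M f "p1' ! u1" "cmp_matrix R'"] inv fresh(1)
      a_less cmp_matrix_shape[of R']
    by (auto simp: R'_def p1'_def p2'_def)
  ultimately show thesis
    using that R1' R2' by (simp add: p1'_def p2'_def)
qed

lemma comp_run_sound:
  assumes "pool_inv S1 S2 (q1, q2, p1, p2, M) R"
    and "reg_run (comp_trans S1 S2) ((q1, q2, p1, p2, M), R) xs zs"
  shows "\<exists>ys. reg_run (trans S1) (q1, map ((!) R) p1) xs ys \<and>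
    reg_run (trans S2) (q2, map ((!) R) p2) ys zs"
  using assms
proof (induction xs arbitrary: q1 q2 p1 p2 M R zs)
  case Nil
  then show ?case by simp
next
  case (Cons x xs)
  obtain \<sigma> d where x: "x = (\<sigma>, d)" by fastforce
  from Cons.prems(2) obtain \<theta> w zs' q1' q2' p1' p2' M' R' where zs: "zs = (\<theta>, w) # zs'"
    and step: "reg_step (comp_trans S1 S2) ((q1, q2, p1, p2, M), R) (\<sigma>, d) (\<theta>, w)
      ((q1', q2', p1', p2', M'), R')"
    and run: "reg_run (comp_trans S1 S2) ((q1', q2', p1', p2', M'), R') xs zs'"
    unfolding x by (cases zs) auto
  obtain y where "reg_step (trans S1) (q1, map ((!) R) p1) (\<sigma>, d) y (q1', map ((!) R') p1')"
    and "reg_step (trans S2) (q2, map ((!) R) p2) y (\<theta>, w) (q2', map ((!) R') p2')"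
    using comp_step_sound(2)[OF Cons.prems(1) step] by blast
  moreover obtain ys where "reg_run (trans S1) (q1', map ((!) R') p1') xs ys"
    and "reg_run (trans S2) (q2', map ((!) R') p2') ys zs'"
    using Cons.IH[OF comp_step_sound(1)[OF Cons.prems(1) step] run] by blast
  ultimately show ?case
    unfolding x zs by (intro exI[of _ "y # ys"]) auto
qed

lemma comp_run_complete:
  assumes "pool_inv S1 S2 (q1, q2, p1, p2, M) R"
    and "reg_run (trans S1) (q1, map ((!) R) p1) xs ys" "reg_run (trans S2) (q2, map ((!) R) p2) ys zs"
  shows "reg_run (comp_trans S1 S2) ((q1, q2, p1, p2, M), R) xs zs"
  using assms
proof (induction xs arbitrary: q1 q2 p1 p2 M R ys zs)
  case Nil
  then show ?case by simp
next
  case (Cons x xs)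
  obtain \<sigma> d where x: "x = (\<sigma>, d)" by fastforce
  from Cons.prems(2) obtain \<gamma> v ys' q1' R1' where ys: "ys = (\<gamma>, v) # ys'"
    and step1: "reg_step (trans S1) (q1, map ((!) R) p1) (\<sigma>, d) (\<gamma>, v) (q1', R1')"
    and run1: "reg_run (trans S1) (q1', R1') xs ys'"
    unfolding x by (cases ys) auto
  from Cons.prems(3) obtain \<theta> w zs' q2' R2' where zs: "zs = (\<theta>, w) # zs'"
    and step2: "reg_step (trans S2) (q2, map ((!) R) p2) (\<gamma>, v) (\<theta>, w) (q2', R2')"
    and run2: "reg_run (trans S2) (q2', R2') ys' zs'"
    unfolding ys by (cases zs) auto
  obtain p1' p2' M' R' where
    step: "reg_step (comp_trans S1 S2) ((q1, q2, p1, p2, M), R) (\<sigma>, d) (\<theta>, w)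
      ((q1', q2', p1', p2', M'), R')"
    and inv: "pool_inv S1 S2 (q1', q2', p1', p2', M') R'"
    and "R1' = map ((!) R') p1'" "R2' = map ((!) R') p2'"
    by (rule comp_step_complete[OF Cons.prems(1) step1 step2])
  with run1 run2 have "reg_run (comp_trans S1 S2) ((q1', q2', p1', p2', M'), R') xs zs'"
    using Cons.IH[OF inv] by blast
  with step show ?case
    unfolding x zs reg_run.simps by blast
qed

lemma comp_run:
  assumes "pool_inv S1 S2 (q1, q2, p1, p2, M) R"
  shows "reg_run (comp_trans S1 S2) ((q1, q2, p1, p2, M), R) xs zs \<longleftrightarrow>
    (\<exists>ys. reg_run (trans S1) (q1, map ((!) R) p1) xs ys \<and>
      reg_run (trans S2) (q2, map ((!) R) p2) ys zs)"
  using comp_run_sound[OF assms] comp_run_complete[OF assms] by blast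

lemma wf_srt_comp_srt: "wf_srt (comp_srt S1 S2)"
  unfolding comp_srt_def
proof (rule wf_srt_srt_ofI)
  show "finite (pool_states S1 S2)"
    using wf1 wf2 by (intro finite_pool_states) (simp_all add: wf_srt_def)
  show "pool_init S1 S2 \<in> pool_states S1 S2"
    using pool_inv_init(1)[OF wf1 wf2] by (simp add: pool_init_def)
  show "length (pool_regs0 S1 S2) = pool_size S1 S2"
    using pool_inv_init(1)[OF wf1 wf2] by (simp add: pool_init_def)
  show "regs_wf (pool_size S1 S2) (comp_trans S1 S2)"
    unfolding regs_wf_def using comp_transD by fast
  show "\<forall>(s, \<sigma>, l, m, u, \<theta>, s') \<in> comp_trans S1 S2. s \<in> pool_states S1 S2 \<and> s' \<in> pool_states S1 S2"
    using comp_transD by fast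
qed

lemma add_free_comp_srt: "add_free (comp_srt S1 S2)"
  unfolding comp_srt_def using comp_transD by (intro add_free_srt_ofI) fast

lemma srt_sem_comp_srt: "srt_sem (comp_srt S1 S2) = rel_comp (srt_sem S1) (srt_sem S2)"
proof -
  have "reg_run (comp_trans S1 S2) (pool_init S1 S2, pool_regs0 S1 S2) xs zs \<longleftrightarrow>
      (\<exists>ys. reg_run (trans S1) (init S1, rinit S1) xs ys \<and>
        reg_run (trans S2) (init S2, rinit S2) ys zs)"
    for xs zs
    using comp_run[OF pool_inv_init(1)[OF wf1 wf2, unfolded pool_init_def]]
      pool_inv_init(2,3)[OF wf1 wf2]
    by (simp add: pool_init_def)
  then show ?thesis
    unfolding srt_sem_eq_reg_run[OF wf1] srt_sem_eq_reg_run[OF wf2]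
    using wf_srt_comp_srt by (simp add: comp_srt_def srt_sem_srt_of rel_comp_Collect reg_run_length)
qed

end


section \<open>Intersection\<close>

inductive_set inter_trans :: "('a, 'b, 'd) srt \<Rightarrow> ('a, 'b, 'd) srt
    \<Rightarrow> (pool_state \<times> 'a \<times> cmp list \<times> upd list \<times> nat \<times> 'b \<times> pool_state) set"
  for S1 S2 where
  inter_transI: "\<lbrakk>(q1, q2, p1, p2, M) \<in> pool_states S1 S2; length l = pool_size S1 S2;
    f = fresh_slot (p1 @ p2); M' = cmp_matrix_upd M l f;
    (q1, \<sigma>, map ((!) (M' ! f)) p1, m1, u1, \<gamma>, q1') \<in> trans S1; p1' = ptr_update f m1 p1;
    (q2, \<sigma>, map ((!) (M' ! f)) p2, m2, u2, \<gamma>, q2') \<in> trans S2; p2' = ptr_update f m2 p2;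
    M' ! (p1' ! u1) ! (p2' ! u2) = CEq\<rbrakk>
   \<Longrightarrow> ((q1, q2, p1, p2, M), \<sigma>, l, slot_write f (pool_size S1 S2), p1' ! u1, \<gamma>, (q1', q2', p1', p2', M'))
      \<in> inter_trans S1 S2"

definition inter_srt ::
    "('a, 'b, 'd::{linorder,group_add}) srt \<Rightarrow> ('a, 'b, 'd) srt \<Rightarrow> ('a, 'b, 'd) srt" where
  "inter_srt S1 S2 = srt_of (pool_states S1 S2) (pool_init S1 S2) (pool_size S1 S2) (pool_regs0 S1 S2)
     (inter_trans S1 S2)"

context
  fixes S1 S2 :: "('a, 'b, 'd::{linorder,group_add}) srt"
  assumes wf1: "wf_srt S1" and wf2: "wf_srt S2" and af1: "add_free S1" and af2: "add_free S2"
begin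

lemma inter_transD:
  assumes "((q1, q2, p1, p2, M), \<sigma>, l, m, u, \<gamma>, (q1', q2', p1', p2', M')) \<in> inter_trans S1 S2"
  shows "(q1, q2, p1, p2, M) \<in> pool_states S1 S2 \<and> (q1', q2', p1', p2', M') \<in> pool_states S1 S2 \<and>
    length l = pool_size S1 S2 \<and> length m = pool_size S1 S2 \<and> u < pool_size S1 S2 \<and>
    set m \<subseteq> {UOld, UNew}"
proof -
  from assms obtain f m1 u1 m2 u2 where src: "(q1, q2, p1, p2, M) \<in> pool_states S1 S2"
    and l: "length l = pool_size S1 S2" and f: "f = fresh_slot (p1 @ p2)"
    and M': "M' = cmp_matrix_upd M l f"
    and t1: "(q1, \<sigma>, map ((!) (M' ! f)) p1, m1, u1, \<gamma>, q1') \<in> trans S1"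
    and p1': "p1' = ptr_update f m1 p1"
    and t2: "(q2, \<sigma>, map ((!) (M' ! f)) p2, m2, u2, \<gamma>, q2') \<in> trans S2"
    and p2': "p2' = ptr_update f m2 p2"
    and m: "m = slot_write f (pool_size S1 S2)" and u: "u = p1' ! u1"
    by (cases rule: inter_trans.cases) auto
  have f_less: "f < pool_size S1 S2"
    using fresh_slot_le_length[of "p1 @ p2"] src f by (auto simp: pool_states_def pool_size_def)
  then have "(q1', q2', p1', p2', M') \<in> pool_states S1 S2"
    using pool_states_next[OF src wf1 wf2 t1 t2] p1' p2' M' l cmp_matrix_upd_shape[of M l f] by auto
  moreover have "u < pool_size S1 S2"
    using pool_slot_less(1)[OF src wf1 wf2 f_less t1] p1' u by simp
  moreover have "set m \<subseteq> {UOld, UNew}"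
    using m set_update_subset_insert[of "replicate (pool_size S1 S2) UOld" f UNew]
    by (auto simp: slot_write_def)
  ultimately show ?thesis
    using src l m by (simp add: slot_write_def)
qed

lemma inter_step_sound:
  assumes inv: "pool_inv S1 S2 (q1, q2, p1, p2, M) R"
    and step: "reg_step (inter_trans S1 S2) ((q1, q2, p1, p2, M), R) (\<sigma>, d) (\<gamma>, w)
      ((q1', q2', p1', p2', M'), R')"
  shows "pool_inv S1 S2 (q1', q2', p1', p2', M') R'"
    and "reg_step (trans S1) (q1, map ((!) R) p1) (\<sigma>, d) (\<gamma>, w) (q1', map ((!) R') p1')"
    and "reg_step (trans S2) (q2, map ((!) R) p2) (\<sigma>, d) (\<gamma>, w) (q2', map ((!) R') p2')"
proof -
  from step obtain m u where
    "((q1, q2, p1, p2, M), \<sigma>, map (cmp_of d) R, m, u, \<gamma>, (q1', q2', p1', p2', M')) \<in> inter_trans S1 S2"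
    and R': "R' = map2 (\<lambda>c r. upd_val c r d) m R" and w: "w = R' ! u"
    by auto
  then obtain f m1 u1 m2 u2 where f: "f = fresh_slot (p1 @ p2)"
    and M': "M' = cmp_matrix_upd M (map (cmp_of d) R) f"
    and t1: "(q1, \<sigma>, map ((!) (M' ! f)) p1, m1, u1, \<gamma>, q1') \<in> trans S1"
    and p1': "p1' = ptr_update f m1 p1"
    and t2: "(q2, \<sigma>, map ((!) (M' ! f)) p2, m2, u2, \<gamma>, q2') \<in> trans S2"
    and p2': "p2' = ptr_update f m2 p2"
    and eq: "M' ! (p1' ! u1) ! (p2' ! u2) = CEq"
    and m: "m = slot_write f (pool_size S1 S2)" and u: "u = p1' ! u1"
    by (cases rule: inter_trans.cases) auto
  note fresh = pool_fresh_slot[OF inv f]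
  have R'_eq: "R' = R[f := d]" using R' m inv by (simp add: map2_upd_val_slot_write)
  have M'_eq: "M' = cmp_matrix R'" using M' fresh(6) R'_eq by simp
  have d: "d = R[f := d] ! f" using fresh(1) by simp
  have "p1' ! u1 < length R'" "p2' ! u2 < length R'"
    using pool_slot_less(1)[OF _ wf1 wf2 _ t1] pool_slot_less(2)[OF _ wf1 wf2 _ t2] inv fresh(1)
      R'_eq p1' p2'
    by auto
  then have "R' ! (p2' ! u2) = w"
    using eq M'_eq w u by (simp add: cmp_matrix_nth)
  then show "reg_step (trans S1) (q1, map ((!) R) p1) (\<sigma>, d) (\<gamma>, w) (q1', map ((!) R') p1')"
    and "reg_step (trans S2) (q2, map ((!) R) p2) (\<sigma>, d) (\<gamma>, w) (q2', map ((!) R') p2')"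
    unfolding pool_reg_step(1)[OF inv f fresh(1) d wf1 af1, folded R'_eq]
      pool_reg_step(2)[OF inv f fresh(1) d wf2 af2, folded R'_eq]
    using t1 t2 M'_eq p1' p2' u w by blast+
  show "pool_inv S1 S2 (q1', q2', p1', p2', M') R'"
    using pool_states_next[OF _ wf1 wf2 t1 t2, of p1 p2 M f f M'] inv fresh(1)
      R'_eq M'_eq p1' p2' cmp_matrix_shape[of R']
    by auto
qed

lemma inter_step_complete:
  assumes inv: "pool_inv S1 S2 (q1, q2, p1, p2, M) R"
    and step1: "reg_step (trans S1) (q1, map ((!) R) p1) (\<sigma>, d) (\<gamma>, w) (q1', R1')"
    and step2: "reg_step (trans S2) (q2, map ((!) R) p2) (\<sigma>, d) (\<gamma>, w) (q2', R2')"
  obtains p1' p2' M' R' where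
    "reg_step (inter_trans S1 S2) ((q1, q2, p1, p2, M), R) (\<sigma>, d) (\<gamma>, w) ((q1', q2', p1', p2', M'), R')"
    "pool_inv S1 S2 (q1', q2', p1', p2', M') R'" "R1' = map ((!) R') p1'" "R2' = map ((!) R') p2'"
proof -
  define f where "f = fresh_slot (p1 @ p2)"
  define R' where "R' = R[f := d]"
  note fresh = pool_fresh_slot[OF inv f_def]
  have d: "d = R[f := d] ! f" using fresh(1) by simp
  from step1 obtain m1 u1
    where t1: "(q1, \<sigma>, map ((!) (cmp_matrix R' ! f)) p1, m1, u1, \<gamma>, q1') \<in> trans S1"
    and R1': "R1' = map ((!) R') (ptr_update f m1 p1)" and w1: "w = R' ! (ptr_update f m1 p1 ! u1)"
    unfolding pool_reg_step(1)[OF inv f_def fresh(1) d wf1 af1, folded R'_def] by blast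
  from step2 obtain m2 u2
    where t2: "(q2, \<sigma>, map ((!) (cmp_matrix R' ! f)) p2, m2, u2, \<gamma>, q2') \<in> trans S2"
    and R2': "R2' = map ((!) R') (ptr_update f m2 p2)" and w2: "w = R' ! (ptr_update f m2 p2 ! u2)"
    unfolding pool_reg_step(2)[OF inv f_def fresh(1) d wf2 af2, folded R'_def] by blast
  define p1' where "p1' = ptr_update f m1 p1"
  define p2' where "p2' = ptr_update f m2 p2"
  have "p1' ! u1 < length R'" "p2' ! u2 < length R'"
    using pool_slot_less(1)[OF _ wf1 wf2 _ t1] pool_slot_less(2)[OF _ wf1 wf2 _ t2] inv fresh(1)
    by (auto simp: R'_def p1'_def p2'_def)
  then have "cmp_matrix R' ! (p1' ! u1) ! (p2' ! u2) = CEq"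
    using w1 w2 by (simp add: cmp_matrix_nth p1'_def p2'_def)
  then have "((q1, q2, p1, p2, M), \<sigma>, map (cmp_of d) R, slot_write f (pool_size S1 S2), p1' ! u1, \<gamma>,
      (q1', q2', p1', p2', cmp_matrix R')) \<in> inter_trans S1 S2"
    by (intro inter_transI[OF _ _ f_def _ t1 p1'_def t2 p2'_def])
      (use inv fresh(6) in \<open>auto simp: R'_def\<close>)
  then have "reg_step (inter_trans S1 S2) ((q1, q2, p1, p2, M), R) (\<sigma>, d) (\<gamma>, w)
      ((q1', q2', p1', p2', cmp_matrix R'), R')"
    using inv w1
    by (auto simp: map2_upd_val_slot_write R'_def p1'_def
        intro!: exI[of _ "slot_write f (pool_size S1 S2)"] exI[of _ "p1' ! u1"])
  moreover have "pool_inv S1 S2 (q1', q2', p1', p2', cmp_matrix R') R'"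
    using pool_states_next[OF _ wf1 wf2 t1 t2, of p1 p2 M f f "cmp_matrix R'"] inv fresh(1)
      cmp_matrix_shape[of R']
    by (auto simp: R'_def p1'_def p2'_def)
  ultimately show thesis
    using that R1' R2' by (simp add: p1'_def p2'_def)
qed

lemma inter_run_sound:
  assumes "pool_inv S1 S2 (q1, q2, p1, p2, M) R"
    and "reg_run (inter_trans S1 S2) ((q1, q2, p1, p2, M), R) xs ys"
  shows "reg_run (trans S1) (q1, map ((!) R) p1) xs ys \<and> reg_run (trans S2) (q2, map ((!) R) p2) xs ys"
  using assms
proof (induction xs arbitrary: q1 q2 p1 p2 M R ys)
  case Nil
  then show ?case by simp
next
  case (Cons x xs)
  obtain \<sigma> d where x: "x = (\<sigma>, d)" by fastforce
  from Cons.prems(2) obtain \<gamma> w ys' q1' q2' p1' p2' M' R' where ys: "ys = (\<gamma>, w) # ys'"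
    and step: "reg_step (inter_trans S1 S2) ((q1, q2, p1, p2, M), R) (\<sigma>, d) (\<gamma>, w)
      ((q1', q2', p1', p2', M'), R')"
    and run: "reg_run (inter_trans S1 S2) ((q1', q2', p1', p2', M'), R') xs ys'"
    unfolding x by (cases ys) auto
  with Cons.IH[OF inter_step_sound(1)[OF Cons.prems(1) step]]
    inter_step_sound(2,3)[OF Cons.prems(1) step]
  show ?case
    unfolding x ys by auto
qed

lemma inter_run_complete:
  assumes "pool_inv S1 S2 (q1, q2, p1, p2, M) R"
    and "reg_run (trans S1) (q1, map ((!) R) p1) xs ys" "reg_run (trans S2) (q2, map ((!) R) p2) xs ys"
  shows "reg_run (inter_trans S1 S2) ((q1, q2, p1, p2, M), R) xs ys"
  using assms
proof (induction xs arbitrary: q1 q2 p1 p2 M R ys)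
  case Nil
  then show ?case by simp
next
  case (Cons x xs)
  obtain \<sigma> d where x: "x = (\<sigma>, d)" by fastforce
  from Cons.prems(2,3) obtain \<gamma> w ys' q1' R1' q2' R2' where ys: "ys = (\<gamma>, w) # ys'"
    and step1: "reg_step (trans S1) (q1, map ((!) R) p1) (\<sigma>, d) (\<gamma>, w) (q1', R1')"
    and run1: "reg_run (trans S1) (q1', R1') xs ys'"
    and step2: "reg_step (trans S2) (q2, map ((!) R) p2) (\<sigma>, d) (\<gamma>, w) (q2', R2')"
    and run2: "reg_run (trans S2) (q2', R2') xs ys'"
    unfolding x by (cases ys) auto
  obtain p1' p2' M' R' where
    step: "reg_step (inter_trans S1 S2) ((q1, q2, p1, p2, M), R) (\<sigma>, d) (\<gamma>, w)
      ((q1', q2', p1', p2', M'), R')"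
    and inv: "pool_inv S1 S2 (q1', q2', p1', p2', M') R'"
    and "R1' = map ((!) R') p1'" "R2' = map ((!) R') p2'"
    by (rule inter_step_complete[OF Cons.prems(1) step1 step2])
  with run1 run2 have "reg_run (inter_trans S1 S2) ((q1', q2', p1', p2', M'), R') xs ys'"
    using Cons.IH[OF inv] by blast
  with step show ?case
    unfolding x ys reg_run.simps by blast
qed

lemma inter_run:
  assumes "pool_inv S1 S2 (q1, q2, p1, p2, M) R"
  shows "reg_run (inter_trans S1 S2) ((q1, q2, p1, p2, M), R) xs ys \<longleftrightarrow>
    reg_run (trans S1) (q1, map ((!) R) p1) xs ys \<and> reg_run (trans S2) (q2, map ((!) R) p2) xs ys"
  using inter_run_sound[OF assms] inter_run_complete[OF assms] by blast

lemma wf_srt_inter_srt: "wf_srt (inter_srt S1 S2)"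
  unfolding inter_srt_def
proof (rule wf_srt_srt_ofI)
  show "finite (pool_states S1 S2)"
    using wf1 wf2 by (intro finite_pool_states) (simp_all add: wf_srt_def)
  show "pool_init S1 S2 \<in> pool_states S1 S2"
    using pool_inv_init(1)[OF wf1 wf2] by (simp add: pool_init_def)
  show "length (pool_regs0 S1 S2) = pool_size S1 S2"
    using pool_inv_init(1)[OF wf1 wf2] by (simp add: pool_init_def)
  show "regs_wf (pool_size S1 S2) (inter_trans S1 S2)"
    unfolding regs_wf_def using inter_transD by fast
  show "\<forall>(s, \<sigma>, l, m, u, \<gamma>, s') \<in> inter_trans S1 S2. s \<in> pool_states S1 S2 \<and> s' \<in> pool_states S1 S2"
    using inter_transD by fast
qed

lemma add_free_inter_srt: "add_free (inter_srt S1 S2)"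
  unfolding inter_srt_def using inter_transD by (intro add_free_srt_ofI) fast

lemma srt_sem_inter_srt: "srt_sem (inter_srt S1 S2) = srt_sem S1 \<inter> srt_sem S2"
proof -
  have "reg_run (inter_trans S1 S2) (pool_init S1 S2, pool_regs0 S1 S2) xs ys \<longleftrightarrow>
      reg_run (trans S1) (init S1, rinit S1) xs ys \<and> reg_run (trans S2) (init S2, rinit S2) xs ys"
    for xs ys
    using inter_run[OF pool_inv_init(1)[OF wf1 wf2, unfolded pool_init_def]]
      pool_inv_init(2,3)[OF wf1 wf2]
    by (simp add: pool_init_def)
  then show ?thesis
    unfolding srt_sem_eq_reg_run[OF wf1] srt_sem_eq_reg_run[OF wf2]
    using wf_srt_inter_srt by (auto simp: inter_srt_def srt_sem_srt_of)
qed

end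


lemma pool_regs0_replicate:
  "rinit S1 = replicate (nregs S1) 0 \<Longrightarrow> rinit S2 = replicate (nregs S2) 0 \<Longrightarrow>
    pool_regs0 S1 S2 = replicate (pool_size S1 S2) 0"
  unfolding pool_regs0_def pool_size_def
  by (simp add: replicate_add[symmetric] flip: append_assoc) (simp add: replicate_append_same)

lemma srt_AD_union_inter:
  assumes "srt_AD S1" "srt_AD S2"
  shows "srt_AD (union_srt S1 S2) \<and> srt_sem (union_srt S1 S2) = srt_sem S1 \<union> srt_sem S2"
    and "srt_AD (inter_srt S1 S2) \<and> srt_sem (inter_srt S1 S2) = srt_sem S1 \<inter> srt_sem S2"
  using assms
  by (auto simp: srt_AD_def wf_srt_union_srt add_free_union_srt srt_sem_union_srt
      wf_srt_inter_srt add_free_inter_srt srt_sem_inter_srt)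

lemma srt_AD_comp:
  assumes "srt_AD S1" "srt_AD S2"
  shows "srt_AD (comp_srt S1 S2) \<and> srt_sem (comp_srt S1 S2) = rel_comp (srt_sem S1) (srt_sem S2)"
  using assms by (auto simp: srt_AD_def wf_srt_comp_srt add_free_comp_srt srt_sem_comp_srt)

lemma srt_AU_union_inter:
  assumes "srt_AU S1" "srt_AU S2"
  shows "srt_AU (union_srt S1 S2) \<and> srt_sem (union_srt S1 S2) = srt_sem S1 \<union> srt_sem S2"
    and "srt_AU (inter_srt S1 S2) \<and> srt_sem (inter_srt S1 S2) = srt_sem S1 \<inter> srt_sem S2"
proof -
  have AD: "srt_AD S1" "srt_AD S2" using assms by (simp_all add: srt_AU_def srt_AD_def)
  have "rinit (union_srt S1 S2) = replicate (nregs (union_srt S1 S2)) 0"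
    and "rinit (inter_srt S1 S2) = replicate (nregs (inter_srt S1 S2)) 0"
    using assms
    by (simp_all add: srt_AU_def union_srt_def inter_srt_def pool_regs0_replicate replicate_add)
  then show "srt_AU (union_srt S1 S2) \<and> srt_sem (union_srt S1 S2) = srt_sem S1 \<union> srt_sem S2"
    and "srt_AU (inter_srt S1 S2) \<and> srt_sem (inter_srt S1 S2) = srt_sem S1 \<inter> srt_sem S2"
    using srt_AD_union_inter[OF AD] unfolding srt_AU_def srt_AD_def by blast+
qed

lemma srt_AU_comp:
  assumes "srt_AU S1" "srt_AU S2"
  shows "srt_AU (comp_srt S1 S2) \<and> srt_sem (comp_srt S1 S2) = rel_comp (srt_sem S1) (srt_sem S2)"
proof -
  have AD: "srt_AD S1" "srt_AD S2" using assms by (simp_all add: srt_AU_def srt_AD_def)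
  have "rinit (comp_srt S1 S2) = replicate (nregs (comp_srt S1 S2)) 0"
    using assms by (simp add: srt_AU_def comp_srt_def pool_regs0_replicate)
  then show ?thesis
    using srt_AD_comp[OF AD] unfolding srt_AU_def srt_AD_def by blast
qed

theorem theorem3p20:
  assumes "infinite (UNIV :: 'd::{linorder, group_add} set)"
  shows "((\<forall>a b :: 'd. a < b \<longrightarrow> (\<exists>c. a < c \<and> c < b)) \<longrightarrow>
           (\<forall>S1 S2 :: ('a::finite,'b::finite,'d) srt. srt_AD S1 \<and> srt_AD S2 \<longrightarrow>
              (\<exists>S :: ('a,'b,'d) srt. srt_AD S \<and> srt_sem S = srt_sem S1 \<union> srt_sem S2) \<and>
              (\<exists>S :: ('a,'b,'d) srt. srt_AD S \<and> srt_sem S = srt_sem S1 \<inter> srt_sem S2)) \<and>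
           (\<forall>(S1 :: ('a,'b,'d) srt) (S2 :: ('b,'c::finite,'d) srt). srt_AD S1 \<and> srt_AD S2 \<longrightarrow>
              (\<exists>S :: ('a,'c,'d) srt. srt_AD S \<and> srt_sem S = rel_comp (srt_sem S1) (srt_sem S2))))
       \<and> ((\<forall>S1 S2 :: ('a,'b,'d) srt. srt_AU S1 \<and> srt_AU S2 \<longrightarrow>
              (\<exists>S :: ('a,'b,'d) srt. srt_AU S \<and> srt_sem S = srt_sem S1 \<union> srt_sem S2) \<and>
              (\<exists>S :: ('a,'b,'d) srt. srt_AU S \<and> srt_sem S = srt_sem S1 \<inter> srt_sem S2)) \<and>
           (\<forall>(S1 :: ('a,'b,'d) srt) (S2 :: ('b,'c,'d) srt). srt_AU S1 \<and> srt_AU S2 \<longrightarrow>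
              (\<exists>S :: ('a,'c,'d) srt. srt_AU S \<and> srt_sem S = rel_comp (srt_sem S1) (srt_sem S2))))"
  by (intro conjI impI allI; elim conjE; rule exI,
      erule (1) srt_AD_union_inter srt_AD_comp srt_AU_union_inter srt_AU_comp)

end
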